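(* Let $N,M\ge1$, let $a_1,\dots,a_M\ge 2$ be real numbers, and for each $m=1,\dots,M$ let $i_m,j_m,k_m\in\{1,\dots,N\}$. Consider the system of inequalities in real variables $x_1,\dots,x_N$: $$a_m x_{i_m}\le x_{j_m}+x_{k_m}\quad (m=1,\dots,M),\qquad x_i>0\quad(i=1,\dots,N).$$ Let $\vec D$ be the digraph on vertex set $\{1,\dots,N\}$ which, for each $m$, contains the directed edges $(i_m,j_m)$ and $(i_m,k_m)$. If $\vec D$ is strongly connected, then the system is feasible if and only if $a_1=a_2=\cdots=a_M=2$, and in that case the feasible solutions are exactly those with $x_1=x_2=\cdots=x_N$. *)

theory Defs
  imports Complex_Main
begin

definition feasible_sol ::
  "nat \<Rightarrow> nat \<Rightarrow> (nat \<Rightarrow> real) \<Rightarrow> (nat \<Rightarrow> nat) \<Rightarrow> (nat \<Rightarrow> nat) \<Rightarrow> (nat \<Rightarrow> nat)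
     \<Rightarrow> (nat \<Rightarrow> real) \<Rightarrow> bool" where
  "feasible_sol N M a i j k x \<longleftrightarrow>
     (\<forall>m\<in>{1..M}. a m * x (i m) \<le> x (j m) + x (k m)) \<and> (\<forall>p\<in>{1..N}. x p > 0)"

definition sys_edges :: "nat \<Rightarrow> (nat \<Rightarrow> nat) \<Rightarrow> (nat \<Rightarrow> nat) \<Rightarrow> (nat \<Rightarrow> nat) \<Rightarrow> (nat \<times> nat) set" where
  "sys_edges M i j k = {(i m, j m) | m. m \<in> {1..M}} \<union> {(i m, k m) | m. m \<in> {1..M}}"

definition strongly_connected_digraph :: "nat set \<Rightarrow> (nat \<times> nat) set \<Rightarrow> bool" where
  "strongly_connected_digraph V E \<longleftrightarrow> (\<forall>u\<in>V. \<forall>v\<in>V. (u, v) \<in> E\<^sup>*)"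

end

theory Submission
  imports Defs
begin

text \<open>A feasible solution attains its maximum X > 0 somewhere. If x (i m) = X then
  a m X \<le> x (j m) + x (k m) \<le> 2X \<le> a m X forces equality throughout, so the maximum
  propagates along both edges out of i m; strong connectivity spreads it to every
  vertex, and then every inequality reads a m X \<le> 2X, i.e. a m = 2.\<close>

lemma tight_sum_bound:
  fixes a X y z :: real
  assumes "0 < X" "2 \<le> a" "a * X \<le> y + z" "y \<le> X" "z \<le> X"
  shows "y = X \<and> z = X \<and> a = 2"
proof -
  have "2 * X \<le> a * X" using assms(1,2) by (intro mult_right_mono) auto
  moreover have "a * X \<le> 2 * X \<Longrightarrow> a \<le> 2" using assms(1) by simp
  ultimately show ?thesis using assms by linarith
qed

lemma strongly_connected_digraph_closed_subset:
  assumes "strongly_connected_digraph V E" "u \<in> V" "u \<in> S"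
    and closed: "\<And>p q. (p, q) \<in> E \<Longrightarrow> p \<in> S \<Longrightarrow> q \<in> S"
  shows "V \<subseteq> S"
proof
  fix v assume "v \<in> V"
  then have "(u, v) \<in> E\<^sup>*"
    using assms(1,2) unfolding strongly_connected_digraph_def by blast
  then show "v \<in> S"
    by (induction rule: rtrancl_induct) (use \<open>u \<in> S\<close> closed in blast)+
qed

lemma feasible_sol_constant_max:
  assumes "N \<ge> 1"
    and a2: "\<forall>m\<in>{1..M}. a m \<ge> 2"
    and ijk: "\<forall>m\<in>{1..M}. i m \<in> {1..N} \<and> j m \<in> {1..N} \<and> k m \<in> {1..N}"
    and sc: "strongly_connected_digraph {1..N} (sys_edges M i j k)"
    and feas: "feasible_sol N M a i j k x"
  shows "\<forall>p\<in>{1..N}. x p = Max (x ` {1..N})"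
proof -
  define X where "X = Max (x ` {1..N})"
  have le_X: "x p \<le> X" if "p \<in> {1..N}" for p
    unfolding X_def using that by (intro Max_ge) auto
  obtain p0 where p0: "p0 \<in> {1..N}" "x p0 = X"
    using Max_in[of "x ` {1..N}"] \<open>N \<ge> 1\<close> unfolding X_def by fastforce
  have "X > 0" using feas p0 unfolding feasible_sol_def by auto
  have "{1..N} \<subseteq> {p. x p = X}"
  proof (rule strongly_connected_digraph_closed_subset[OF sc p0(1)])
    show "p0 \<in> {p. x p = X}" using p0(2) by simp
  next
    fix p q assume "(p, q) \<in> sys_edges M i j k" "p \<in> {p. x p = X}"
    then obtain m where m: "m \<in> {1..M}" "x (i m) = X" "q = j m \<or> q = k m"
      unfolding sys_edges_def by auto
    have "a m * x (i m) \<le> x (j m) + x (k m)"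
      using feas m(1) unfolding feasible_sol_def by blast
    then have "x (j m) = X \<and> x (k m) = X"
      using tight_sum_bound[OF \<open>X > 0\<close>, of "a m" "x (j m)" "x (k m)"] a2 ijk le_X m by auto
    then show "q \<in> {p. x p = X}" using m(3) by auto
  qed
  then show ?thesis unfolding X_def by auto
qed

lemma feasible_sol_imp_coeffs_eq_2:
  assumes "N \<ge> 1"
    and a2: "\<forall>m\<in>{1..M}. a m \<ge> 2"
    and ijk: "\<forall>m\<in>{1..M}. i m \<in> {1..N} \<and> j m \<in> {1..N} \<and> k m \<in> {1..N}"
    and sc: "strongly_connected_digraph {1..N} (sys_edges M i j k)"
    and feas: "feasible_sol N M a i j k x"
  shows "\<forall>m\<in>{1..M}. a m = 2"
proof
  fix m assume m: "m \<in> {1..M}"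
  define X where "X = Max (x ` {1..N})"
  have const: "\<forall>p\<in>{1..N}. x p = X"
    using feasible_sol_constant_max[OF assms] unfolding X_def .
  have "X > 0" using feas const \<open>N \<ge> 1\<close> unfolding feasible_sol_def by force
  moreover have "a m * x (i m) \<le> x (j m) + x (k m)"
    using feas m unfolding feasible_sol_def by blast
  ultimately show "a m = 2"
    using tight_sum_bound[of X "a m" "x (j m)" "x (k m)"] a2 ijk const m by auto
qed

lemma feasible_sol_of_constant:
  assumes a_le: "\<forall>m\<in>{1..M}. a m \<le> 2"
    and ijk: "\<forall>m\<in>{1..M}. i m \<in> {1..N} \<and> j m \<in> {1..N} \<and> k m \<in> {1..N}"
    and pos: "\<forall>p\<in>{1..N}. x p > 0"
    and const: "\<forall>p\<in>{1..N}. \<forall>q\<in>{1..N}. x p = x q"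
  shows "feasible_sol N M a i j k x"
  unfolding feasible_sol_def
proof (intro conjI ballI)
  fix m assume m: "m \<in> {1..M}"
  then have "i m \<in> {1..N}" "j m \<in> {1..N}" "k m \<in> {1..N}"
    using ijk by auto
  then have "x (j m) = x (i m)" "x (k m) = x (i m)" "x (i m) > 0"
    using const pos by blast+
  moreover have "a m * x (i m) \<le> 2 * x (i m)"
    using a_le m \<open>x (i m) > 0\<close> by (intro mult_right_mono) auto
  ultimately show "a m * x (i m) \<le> x (j m) + x (k m)" by simp
qed (use pos in blast)

theorem lemma2p3:
  fixes N M :: nat and a :: "nat \<Rightarrow> real" and i j k :: "nat \<Rightarrow> nat"
  assumes "N \<ge> 1" and "M \<ge> 1"
    and "\<forall>m\<in>{1..M}. a m \<ge> 2"
    and "\<forall>m\<in>{1..M}. i m \<in> {1..N} \<and> j m \<in> {1..N} \<and> k m \<in> {1..N}"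
    and "strongly_connected_digraph {1..N} (sys_edges M i j k)"
  shows "((\<exists>x. feasible_sol N M a i j k x) \<longleftrightarrow> (\<forall>m\<in>{1..M}. a m = 2))
       \<and> ((\<forall>m\<in>{1..M}. a m = 2) \<longrightarrow>
            (\<forall>x. feasible_sol N M a i j k x \<longleftrightarrow>
                 (\<forall>p\<in>{1..N}. x p > 0) \<and> (\<forall>p\<in>{1..N}. \<forall>q\<in>{1..N}. x p = x q)))"
proof (intro conjI iffI impI allI)
  show "\<forall>m\<in>{1..M}. a m = 2" if "\<exists>x. feasible_sol N M a i j k x"
    using that feasible_sol_imp_coeffs_eq_2[OF assms(1,3-5)] by blast
  show "\<exists>x. feasible_sol N M a i j k x" if "\<forall>m\<in>{1..M}. a m = 2"
    using feasible_sol_of_constant[OF _ assms(4), of a "\<lambda>_. 1"] that by auto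
next
  fix x :: "nat \<Rightarrow> real" assume feas: "feasible_sol N M a i j k x"
  then have "\<forall>p\<in>{1..N}. x p = Max (x ` {1..N})"
    by (rule feasible_sol_constant_max[OF assms(1,3-5)])
  with feas show "\<forall>p\<in>{1..N}. x p > 0" and "\<forall>p\<in>{1..N}. \<forall>q\<in>{1..N}. x p = x q"
    unfolding feasible_sol_def by metis+
next
  fix x :: "nat \<Rightarrow> real"
  assume "\<forall>m\<in>{1..M}. a m = 2"
    and "(\<forall>p\<in>{1..N}. x p > 0) \<and> (\<forall>p\<in>{1..N}. \<forall>q\<in>{1..N}. x p = x q)"
  moreover from this(1) have "\<forall>m\<in>{1..M}. a m \<le> 2" by simp
  ultimately show "feasible_sol N M a i j k x"
    using feasible_sol_of_constant[OF _ assms(4)] by blast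
qed

end
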